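(* Let $\kappa>0$ and let $Z$ be a $\kappa$-self-similar Markov process with transition function $P$. Let $(G_{s,t})_{0<s\le t}$ be a family of probability distributions on $(0,1]$ with $G_{s,s}=\delta_1$ (the Dirac mass at $1$), such that for every bounded measurable function $h$ and all $0<s\le t\le u$, \[ \int\int h(ab)\,G_{s,t}(\mathrm{d}a)\,G_{t,u}(\mathrm{d}b)=\int h(r)\,G_{s,u}(\mathrm{d}r). \] Define $\widetilde P(0,t,0,\mathrm{d}y)=P(0,t,0,\mathrm{d}y)$ and, for $0<s\le t$, \[ \widetilde P(s,t,x,\mathrm{d}y)=\int P\bigl(rt,t,(t/s)^{\kappa}r^{\kappa}x,\mathrm{d}y\bigr)\,G_{s,t}(\mathrm{d}r). \] Then $\widetilde P$ is a transition function: each $\widetilde P(s,t,x,\cdot)$ is a probability measure, $x\mapsto\widetilde P(s,t,x,B)$ is measurable, $\widetilde P(s,s,x,\cdot)=\delta_x$, and the Chapman–Kolmogorov equations hold.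
   Context: A real-valued càdlàg Markov process $Z=(Z_t)_{t\ge0}$ is $\kappa$-self-similar if $(Z_{ct})_{t\ge0}$ and $(c^\kappa Z_t)_{t\ge0}$ have the same finite-dimensional distributions for every $c>0$ (so $Z_0=0$). Its transition function is $P(s,t,x,\mathrm{d}y)=\mathbb{P}(Z_t\in\mathrm{d}y\mid Z_s=x)$, which satisfies $P(cs,ct,c^\kappa x,c^\kappa\,\mathrm{d}y)=P(s,t,x,\mathrm{d}y)$ for all $c>0$, where $\int g(y)M(c\,\mathrm{d}y):=\int g(y/c)M(\mathrm{d}y)$. *)

theory Defs
  imports "HOL-Probability.Probability"
begin

text \<open>Since the process starts at 0 (self-similarity forces Z_0 = 0), at the
  initial time s = 0 only the starting point x = 0 is relevant.\<close>

definition admissible :: "real \<Rightarrow> real \<Rightarrow> bool" where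
  "admissible s x \<longleftrightarrow> 0 \<le> s \<and> (s = 0 \<longrightarrow> x = 0)"

definition transition_function :: "(real \<Rightarrow> real \<Rightarrow> real \<Rightarrow> real measure) \<Rightarrow> bool" where
  "transition_function Q \<longleftrightarrow>
     (\<forall>s t x. admissible s x \<and> s \<le> t \<longrightarrow>
        prob_space (Q s t x) \<and> sets (Q s t x) = sets borel) \<and>
     (\<forall>s t B. 0 < s \<and> s \<le> t \<and> B \<in> sets borel \<longrightarrow>
        (\<lambda>x. emeasure (Q s t x) B) \<in> borel_measurable borel) \<and>
     (\<forall>s x. admissible s x \<longrightarrow> Q s s x = return borel x) \<and>
     (\<forall>s t u x B. admissible s x \<and> s \<le> t \<and> t \<le> u \<and> B \<in> sets borel \<longrightarrow>
        emeasure (Q s u x) B = (\<integral>\<^sup>+ y. emeasure (Q t u y) B \<partial>(Q s t x)))"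

text \<open>Self-similarity of the transition function:
  P(cs, ct, c^\<kappa> x, c^\<kappa> dy) = P(s, t, x, dy), where M(c dy) is the image of M
  under y \<mapsto> y / c.\<close>

definition self_similar_tf :: "real \<Rightarrow> (real \<Rightarrow> real \<Rightarrow> real \<Rightarrow> real measure) \<Rightarrow> bool" where
  "self_similar_tf \<kappa> Q \<longleftrightarrow>
     (\<forall>c s t x. 0 < c \<and> admissible s x \<and> s \<le> t \<longrightarrow>
        distr (Q (c * s) (c * t) (c powr \<kappa> * x)) borel (\<lambda>y. y / c powr \<kappa>) = Q s t x)"

definition Ptil :: "real \<Rightarrow> (real \<Rightarrow> real \<Rightarrow> real \<Rightarrow> real measure) \<Rightarrow> (real \<Rightarrow> real \<Rightarrow> real measure)
                     \<Rightarrow> real \<Rightarrow> real \<Rightarrow> real \<Rightarrow> real measure" where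
  "Ptil \<kappa> P G s t x =
     (if s = 0 then P 0 t 0
      else measure_of UNIV (sets borel)
             (\<lambda>B. \<integral>\<^sup>+ r. emeasure (P (r * t) t ((t / s) powr \<kappa> * r powr \<kappa> * x)) B \<partial>(G s t)))"

end

theory Submission
  imports Defs
begin

text \<open>Self-similarity with factor \<open>c = b u / t\<close> moves a kernel
  started at time \<open>t\<close> back to one started at \<open>c s\<close>, so by Chapman-Kolmogorov for \<open>P\<close>,
  integrating \<open>P (b u) u ((u/t)\<^sup>\<kappa> b\<^sup>\<kappa> y)\<close> in \<open>y\<close> against \<open>P (a t) t ((t/s)\<^sup>\<kappa> a\<^sup>\<kappa> x)\<close>
  gives \<open>P (a b u) u ((u/s)\<^sup>\<kappa> (a b)\<^sup>\<kappa> x)\<close>, a function of the product \<open>a b\<close> only.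
  Chapman-Kolmogorov for \<open>Ptil\<close> is then exactly the multiplicative convolution identity
  for \<open>G\<close>. At \<open>s = 0\<close> the same rescaling collapses the inner integral to \<open>P 0 u 0\<close>.\<close>

lemma (in prob_space) nn_integral_eq_integral_bounded:
  assumes "f \<in> borel_measurable M" and "\<And>x. 0 \<le> f x" and "\<And>x. f x \<le> C"
  shows "(\<integral>\<^sup>+x. ennreal (f x) \<partial>M) = ennreal (\<integral>x. f x \<partial>M)"
proof (rule nn_integral_eq_integral)
  show "integrable M f"
    by (rule integrable_const_bound[where B = C])
       (use assms in \<open>auto intro: abs_of_nonneg[THEN eq_refl, THEN order_trans]\<close>)
qed (use assms in auto)

lemma measurable_compose_restrict_pair:
  assumes F: "(\<lambda>(s, x). F s x) \<in> borel_measurable (restrict_space borel S \<Otimes>\<^sub>M borel)"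
    and f: "f \<in> borel_measurable M" and g: "g \<in> borel_measurable M"
    and f_in: "\<And>w. w \<in> space M \<Longrightarrow> f w \<in> S"
  shows "(\<lambda>w. F (f w) (g w)) \<in> borel_measurable M"
proof -
  have "(\<lambda>w. (f w, g w)) \<in> M \<rightarrow>\<^sub>M restrict_space borel S \<Otimes>\<^sub>M borel"
    by (intro measurable_Pair measurable_restrict_space2) (auto simp: f g f_in)
  from measurable_compose[OF this F] show ?thesis by simp
qed

locale self_similar_transition =
  fixes \<kappa> :: real and P :: "real \<Rightarrow> real \<Rightarrow> real \<Rightarrow> real measure"
  assumes P_tf: "transition_function P"
    and P_ss: "self_similar_tf \<kappa> P"
    and P_meas: "\<And>t B. 0 < t \<Longrightarrow> B \<in> sets borel \<Longrightarrow>
        (\<lambda>(s, x). emeasure (P s t x) B) \<in> borel_measurable (restrict_space borel {0<..t} \<Otimes>\<^sub>M borel)"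
begin

lemma prob_space_P: "admissible s x \<Longrightarrow> s \<le> t \<Longrightarrow> prob_space (P s t x)"
  and sets_P: "admissible s x \<Longrightarrow> s \<le> t \<Longrightarrow> sets (P s t x) = sets borel"
  and P_diag: "admissible s x \<Longrightarrow> P s s x = return borel x"
  and P_chapman_kolmogorov: "admissible s x \<Longrightarrow> s \<le> t \<Longrightarrow> t \<le> u \<Longrightarrow> B \<in> sets borel \<Longrightarrow>
        emeasure (P s u x) B = (\<integral>\<^sup>+ y. emeasure (P t u y) B \<partial>P s t x)"
  using P_tf unfolding transition_function_def by auto

lemma measurable_emeasure_P:
  assumes "0 < t" and "B \<in> sets borel"
    and "f \<in> borel_measurable M" and "g \<in> borel_measurable M"
    and "\<And>w. w \<in> space M \<Longrightarrow> 0 < f w \<and> f w \<le> t"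
  shows "(\<lambda>w. emeasure (P (f w) t (g w)) B) \<in> borel_measurable M"
  by (rule measurable_compose_restrict_pair[OF P_meas]) (use assms in auto)

lemma nn_integral_P_rescaled:
  assumes adm: "admissible s x" and st: "s \<le> t" and t: "0 < t"
    and c: "0 < c" and ctu: "c * t \<le> u" and B: "B \<in> sets borel"
  shows "(\<integral>\<^sup>+y. emeasure (P (c * t) u (c powr \<kappa> * y)) B \<partial>P s t x)
       = emeasure (P (c * s) u (c powr \<kappa> * x)) B"
proof -
  have adm_c: "admissible (c * s) (c powr \<kappa> * x)"
    using adm c unfolding admissible_def by auto
  have cs_ct: "c * s \<le> c * t"
    using st c by simp
  have meas: "(\<lambda>y. emeasure (P (c * t) u (c powr \<kappa> * y)) B) \<in> borel_measurable borel"
    by (rule measurable_emeasure_P) (use c t ctu B in \<open>auto intro: order.strict_trans2[OF mult_pos_pos]\<close>)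
  have "P s t x = distr (P (c * s) (c * t) (c powr \<kappa> * x)) borel (\<lambda>y. y / c powr \<kappa>)"
    using P_ss adm st c unfolding self_similar_tf_def by auto
  then have "(\<integral>\<^sup>+y. emeasure (P (c * t) u (c powr \<kappa> * y)) B \<partial>P s t x)
      = (\<integral>\<^sup>+y. emeasure (P (c * t) u (c powr \<kappa> * (y / c powr \<kappa>))) B \<partial>P (c * s) (c * t) (c powr \<kappa> * x))"
    using meas by (simp add: nn_integral_distr measurable_cong_sets[OF sets_P[OF adm_c cs_ct]])
  also have "\<dots> = (\<integral>\<^sup>+y. emeasure (P (c * t) u y) B \<partial>P (c * s) (c * t) (c powr \<kappa> * x))"
    using c by simp
  also have "\<dots> = emeasure (P (c * s) u (c powr \<kappa> * x)) B"
    by (rule P_chapman_kolmogorov[symmetric]) (use adm_c cs_ct ctu B in auto)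
  finally show ?thesis .
qed

end

text \<open>\<open>P (r t) t\<close> is only known to be a probability kernel for \<open>0 < r \<le> 1\<close>, and \<open>G s t\<close> is carried by
  \<open>(0, 1]\<close>; clipping \<open>r\<close> into \<open>(0, 1]\<close> makes the mixture a measurable family of probability
  kernels without changing it up to \<open>G\<close>-null sets.\<close>

definition unit_clip :: "real \<Rightarrow> real" where
  "unit_clip r = (if r \<in> {0<..1} then r else 1)"

lemma unit_clip_pos: "0 < unit_clip r"
  and unit_clip_le_1: "unit_clip r \<le> 1"
  and unit_clip_id: "0 < r \<Longrightarrow> r \<le> 1 \<Longrightarrow> unit_clip r = r"
  by (auto simp: unit_clip_def)

lemma unit_clip_mult_bounds: "0 < t \<Longrightarrow> 0 < unit_clip r * t \<and> unit_clip r * t \<le> t"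
  using unit_clip_pos[of r] unit_clip_le_1[of r] by (simp add: mult_le_cancel_right1)

lemma measurable_unit_clip [measurable]: "unit_clip \<in> borel_measurable borel"
  unfolding unit_clip_def by measurable

locale self_similar_mixture = self_similar_transition +
  fixes G :: "real \<Rightarrow> real \<Rightarrow> real measure"
  assumes G_prob: "\<And>s t. 0 < s \<Longrightarrow> s \<le> t \<Longrightarrow> prob_space (G s t)"
    and G_sets: "\<And>s t. 0 < s \<Longrightarrow> s \<le> t \<Longrightarrow> sets (G s t) = sets borel"
    and G_supp: "\<And>s t. 0 < s \<Longrightarrow> s \<le> t \<Longrightarrow> emeasure (G s t) {0<..1} = 1"
    and G_diag: "\<And>s. 0 < s \<Longrightarrow> G s s = return borel 1"
    and G_comp: "\<And>s t u (h :: real \<Rightarrow> real). 0 < s \<Longrightarrow> s \<le> t \<Longrightarrow> t \<le> u \<Longrightarrow>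
        h \<in> borel_measurable borel \<Longrightarrow> (\<exists>C. \<forall>y. \<bar>h y\<bar> \<le> C) \<Longrightarrow>
        (\<integral>a. (\<integral>b. h (a * b) \<partial>(G t u)) \<partial>(G s t)) = (\<integral>r. h r \<partial>(G s u))"
begin

definition mix_kernel :: "real \<Rightarrow> real \<Rightarrow> real \<Rightarrow> real \<Rightarrow> real measure" where
  "mix_kernel s t x r = P (unit_clip r * t) t ((t / s) powr \<kappa> * unit_clip r powr \<kappa> * x)"

lemma AE_G_unit_interval:
  assumes "0 < s" "s \<le> t"
  shows "AE r in G s t. 0 < r \<and> r \<le> 1"
proof -
  interpret prob_space "G s t" using G_prob[OF assms] .
  have "AE r in G s t. r \<in> {0<..1}"
    by (subst AE_in_set_eq_1) (auto simp: G_sets[OF assms] measure_def G_supp[OF assms])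
  then show ?thesis by simp
qed

lemma prob_space_mix_kernel: "0 < t \<Longrightarrow> prob_space (mix_kernel s t x r)"
  and sets_mix_kernel: "0 < t \<Longrightarrow> sets (mix_kernel s t x r) = sets borel"
proof -
  assume "0 < t"
  then have "admissible (unit_clip r * t) y" "unit_clip r * t \<le> t" for y
    using unit_clip_mult_bounds[OF \<open>0 < t\<close>, of r] unfolding admissible_def by auto
  then show "prob_space (mix_kernel s t x r)" "sets (mix_kernel s t x r) = sets borel"
    unfolding mix_kernel_def by (simp_all add: prob_space_P sets_P)
qed

lemma measurable_emeasure_mix_kernel:
  assumes "0 < t" "B \<in> sets borel"
  shows "(\<lambda>(x, r). emeasure (mix_kernel s t x r) B) \<in> borel_measurable (borel \<Otimes>\<^sub>M borel)"
  unfolding mix_kernel_def case_prod_beta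
  by (rule measurable_emeasure_P) (use assms unit_clip_mult_bounds in auto)

lemma measurable_emeasure_mix_kernel_param:
  "0 < t \<Longrightarrow> B \<in> sets borel \<Longrightarrow> (\<lambda>r. emeasure (mix_kernel s t x r) B) \<in> borel_measurable borel"
  using measurable_Pair2[OF measurable_emeasure_mix_kernel] by simp

lemma mix_kernel_measurable_subprob:
  assumes "0 < s" "s \<le> t"
  shows "mix_kernel s t x \<in> G s t \<rightarrow>\<^sub>M subprob_algebra borel"
proof (rule measurable_subprob_algebra)
  have t: "0 < t" using assms by simp
  show "subprob_space (mix_kernel s t x r)" for r
    using prob_space_mix_kernel[OF t] by (rule prob_space_imp_subprob_space)
  show "sets (mix_kernel s t x r) = sets borel" for r
    using sets_mix_kernel[OF t] .
  show "(\<lambda>r. emeasure (mix_kernel s t x r) A) \<in> borel_measurable (G s t)" if "A \<in> sets borel" for A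
    using measurable_emeasure_mix_kernel_param[OF t that]
    by (simp add: measurable_cong_sets[OF G_sets[OF assms] refl])
qed

lemma Ptil_eq_bind:
  assumes "0 < s" "s \<le> t"
  shows "Ptil \<kappa> P G s t x = G s t \<bind> mix_kernel s t x"
proof -
  let ?M = "G s t \<bind> mix_kernel s t x"
  have ne: "space (G s t) \<noteq> {}"
    using prob_space.not_empty[OF G_prob[OF assms]] .
  have sets_M: "sets ?M = sets borel"
    using assms by (intro sets_bind[OF sets_mix_kernel ne]) auto
  have "(\<integral>\<^sup>+ r. emeasure (P (r * t) t ((t / s) powr \<kappa> * r powr \<kappa> * x)) A \<partial>G s t) = emeasure ?M A"
    if "A \<in> sets borel" for A
  proof -
    have "emeasure ?M A = (\<integral>\<^sup>+ r. emeasure (mix_kernel s t x r) A \<partial>G s t)"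
      by (rule emeasure_bind[OF ne mix_kernel_measurable_subprob[OF assms] that])
    also have "\<dots> = (\<integral>\<^sup>+ r. emeasure (P (r * t) t ((t / s) powr \<kappa> * r powr \<kappa> * x)) A \<partial>G s t)"
      by (rule nn_integral_cong_AE)
         (use AE_G_unit_interval[OF assms] in \<open>auto simp: mix_kernel_def unit_clip_id\<close>)
    finally show ?thesis by simp
  qed
  then have "Ptil \<kappa> P G s t x = measure_of UNIV (sets borel) (emeasure ?M)"
    unfolding Ptil_def using assms
    by (simp, intro measure_of_eq) (auto simp: sets.sigma_sets_eq[of borel, simplified])
  also have "\<dots> = ?M"
    using measure_of_of_measure[of ?M] sets_eq_imp_space_eq[OF sets_M] by (simp add: sets_M)
  finally show ?thesis .
qed

lemma emeasure_Ptil: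
  assumes "0 < s" "s \<le> t" "B \<in> sets borel"
  shows "emeasure (Ptil \<kappa> P G s t x) B = (\<integral>\<^sup>+r. emeasure (mix_kernel s t x r) B \<partial>G s t)"
  unfolding Ptil_eq_bind[OF assms(1,2)]
  by (rule emeasure_bind[OF prob_space.not_empty[OF G_prob[OF assms(1,2)]]
        mix_kernel_measurable_subprob[OF assms(1,2)] assms(3)])

lemma measurable_emeasure_Ptil:
  assumes "0 < s" "s \<le> t" "B \<in> sets borel"
  shows "(\<lambda>x. emeasure (Ptil \<kappa> P G s t x) B) \<in> borel_measurable borel"
proof -
  interpret prob_space "G s t" using G_prob[OF assms(1,2)] .
  have "(\<lambda>x. \<integral>\<^sup>+r. emeasure (mix_kernel s t x r) B \<partial>G s t) \<in> borel_measurable borel"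
    using measurable_emeasure_mix_kernel[of t B s] assms
    by (intro borel_measurable_nn_integral)
       (simp add: measurable_cong_sets[OF sets_pair_measure_cong[OF refl G_sets[OF assms(1,2)]] refl])
  then show ?thesis by (simp add: emeasure_Ptil[OF assms])
qed

lemma prob_space_Ptil: "admissible s x \<Longrightarrow> s \<le> t \<Longrightarrow> prob_space (Ptil \<kappa> P G s t x)"
  and sets_Ptil: "admissible s x \<Longrightarrow> s \<le> t \<Longrightarrow> sets (Ptil \<kappa> P G s t x) = sets borel"
proof -
  assume adm: "admissible s x" and st: "s \<le> t"
  have "prob_space (Ptil \<kappa> P G s t x) \<and> sets (Ptil \<kappa> P G s t x) = sets borel"
  proof (cases "s = 0")
    case True
    with adm st show ?thesis
      using prob_space_P sets_P by (simp add: Ptil_def admissible_def)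
  next
    case False
    with adm st have s: "0 < s" and t: "0 < t"
      unfolding admissible_def by auto
    interpret prob_space "G s t" using G_prob[OF s st] .
    show ?thesis unfolding Ptil_eq_bind[OF s st]
      by (intro conjI prob_space_bind[OF AE_I2 mix_kernel_measurable_subprob[OF s st]]
            sets_bind[OF sets_mix_kernel[OF t] not_empty] prob_space_mix_kernel[OF t])
  qed
  then show "prob_space (Ptil \<kappa> P G s t x)" "sets (Ptil \<kappa> P G s t x) = sets borel"
    by auto
qed

lemma Ptil_diag:
  assumes adm: "admissible s x"
  shows "Ptil \<kappa> P G s s x = return borel x"
proof (cases "s = 0")
  case True
  with adm show ?thesis using P_diag by (simp add: Ptil_def admissible_def)
next
  case False
  with adm have s: "0 < s" unfolding admissible_def by auto
  have "Ptil \<kappa> P G s s x = return borel 1 \<bind> mix_kernel s s x"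
    using Ptil_eq_bind[OF s order_refl] G_diag[OF s] by simp
  also have "\<dots> = mix_kernel s s x 1"
    using mix_kernel_measurable_subprob[OF s order_refl, of x] G_diag[OF s] by (intro bind_return) auto
  also have "\<dots> = P s s x"
    using s by (simp add: mix_kernel_def unit_clip_def)
  finally show ?thesis using P_diag[OF adm] by simp
qed

lemma nn_integral_Ptil_swap:
  assumes t: "0 < t" and tu: "t \<le> u" and B: "B \<in> sets borel"
    and M: "prob_space M" "sets M = sets borel"
  shows "(\<integral>\<^sup>+y. emeasure (Ptil \<kappa> P G t u y) B \<partial>M)
       = (\<integral>\<^sup>+b. \<integral>\<^sup>+y. emeasure (mix_kernel t u y b) B \<partial>M \<partial>G t u)"
proof -
  interpret M: prob_space M by fact
  interpret G: prob_space "G t u" using G_prob[OF t tu] .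
  interpret pair_sigma_finite M "G t u"
    by unfold_locales
  have "(\<lambda>(y, b). emeasure (mix_kernel t u y b) B) \<in> borel_measurable (M \<Otimes>\<^sub>M G t u)"
    using measurable_emeasure_mix_kernel[of u B t] t tu B
    by (simp add: measurable_cong_sets[OF sets_pair_measure_cong[OF M(2) G_sets[OF t tu]] refl])
  from Fubini[OF this[unfolded case_prod_beta]] show ?thesis
    by (simp add: emeasure_Ptil[OF t tu B])
qed

lemma nn_integral_mix_kernel_P:
  assumes t: "0 < t" and tu: "t \<le> u" and adm: "admissible s x" and st: "s \<le> t"
    and B: "B \<in> sets borel"
  shows "(\<integral>\<^sup>+y. emeasure (mix_kernel t u y b) B \<partial>P s t x)
       = emeasure (P (unit_clip b * u / t * s) u ((unit_clip b * u / t) powr \<kappa> * x)) B"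
proof -
  define c where "c = unit_clip b * u / t"
  have c: "0 < c"
    using unit_clip_pos[of b] t tu by (simp add: c_def)
  have "mix_kernel t u y b = P (c * t) u (c powr \<kappa> * y)" for y
    using t unit_clip_pos[of b] tu
    by (simp add: mix_kernel_def c_def powr_mult powr_divide less_imp_le mult_ac)
  moreover have "c * t \<le> u"
    using t tu unit_clip_le_1[of b] by (simp add: c_def mult_le_cancel_right1)
  ultimately show ?thesis
    using nn_integral_P_rescaled[OF adm st t c _ B] by (simp add: c_def)
qed

lemma nn_integral_mix_kernel_mix_kernel:
  assumes s: "0 < s" and st: "s \<le> t" and tu: "t \<le> u" and B: "B \<in> sets borel"
    and a: "0 < a" "a \<le> 1" and b: "0 < b" "b \<le> 1"
  shows "(\<integral>\<^sup>+y. emeasure (mix_kernel t u y b) B \<partial>mix_kernel s t x a)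
       = emeasure (mix_kernel s u x (a * b)) B"
proof -
  have t: "0 < t" using s st by simp
  have ab: "0 < a * b" "a * b \<le> 1"
    using a b by (auto simp: mult_le_one)
  have adm: "admissible (a * t) ((t / s) powr \<kappa> * a powr \<kappa> * x)" and at: "a * t \<le> t"
    using a t by (auto simp: admissible_def mult_le_cancel_right1)
  have "mix_kernel s t x a = P (a * t) t ((t / s) powr \<kappa> * a powr \<kappa> * x)"
    using a by (simp add: mix_kernel_def unit_clip_id)
  then have "(\<integral>\<^sup>+y. emeasure (mix_kernel t u y b) B \<partial>mix_kernel s t x a)
      = emeasure (P (b * u / t * (a * t)) u ((b * u / t) powr \<kappa> * ((t / s) powr \<kappa> * a powr \<kappa> * x))) B"
    using nn_integral_mix_kernel_P[OF t tu adm at B, of b] b by (simp add: unit_clip_id)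
  also have "b * u / t * (a * t) = a * b * u"
    using t by (simp add: field_simps)
  also have "(b * u / t) powr \<kappa> * ((t / s) powr \<kappa> * a powr \<kappa> * x)
      = (u / s) powr \<kappa> * (a * b) powr \<kappa> * x"
    using a b s t tu by (simp add: powr_mult powr_divide less_imp_le)
  finally show ?thesis
    using ab by (simp add: mix_kernel_def unit_clip_id)
qed

lemma nn_integral_G_comp:
  assumes s: "0 < s" and st: "s \<le> t" and tu: "t \<le> u"
    and h: "h \<in> borel_measurable borel" "\<And>r. 0 \<le> h r" "\<And>r. h r \<le> 1"
  shows "(\<integral>\<^sup>+a. \<integral>\<^sup>+b. ennreal (h (a * b)) \<partial>G t u \<partial>G s t) = (\<integral>\<^sup>+r. ennreal (h r) \<partial>G s u)"
proof -
  have t: "0 < t" and su: "s \<le> u" using s st tu by auto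
  interpret Gst: prob_space "G s t" using G_prob[OF s st] .
  interpret Gtu: prob_space "G t u" using G_prob[OF t tu] .
  interpret Gsu: prob_space "G s u" using G_prob[OF s su] .
  define F where "F a = (\<integral>b. h (a * b) \<partial>G t u)" for a
  have inner: "(\<integral>\<^sup>+b. ennreal (h (a * b)) \<partial>G t u) = ennreal (F a)" for a
    unfolding F_def using h
    by (intro Gtu.nn_integral_eq_integral_bounded) (auto simp: measurable_cong_sets[OF G_sets[OF t tu]])
  have "F \<in> borel_measurable (G s t)"
    unfolding F_def using h
    by (intro Gtu.borel_measurable_lebesgue_integral)
       (simp add: measurable_cong_sets[OF sets_pair_measure_cong[OF G_sets[OF s st] G_sets[OF t tu]]])
  moreover have "0 \<le> F a" "F a \<le> 1" for a
    unfolding F_def using h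
    by (auto intro!: integral_nonneg_AE Gtu.integral_le_const
          Gtu.integrable_const_bound[where B = 1] simp: measurable_cong_sets[OF G_sets[OF t tu]])
  ultimately have "(\<integral>\<^sup>+a. ennreal (F a) \<partial>G s t) = ennreal (\<integral>a. F a \<partial>G s t)"
    by (intro Gst.nn_integral_eq_integral_bounded)
  also have "(\<integral>a. F a \<partial>G s t) = (\<integral>r. h r \<partial>G s u)"
    unfolding F_def using h by (intro G_comp[OF s st tu]) (auto intro!: exI[of _ 1])
  also have "ennreal \<dots> = (\<integral>\<^sup>+r. ennreal (h r) \<partial>G s u)"
    using h by (intro Gsu.nn_integral_eq_integral_bounded[symmetric])
       (auto simp: measurable_cong_sets[OF G_sets[OF s su]])
  finally show ?thesis by (simp add: inner)
qed

lemma Ptil_chapman_kolmogorov_origin: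
  assumes t: "0 \<le> t" and tu: "t \<le> u" and B: "B \<in> sets borel"
  shows "emeasure (Ptil \<kappa> P G 0 u 0) B = (\<integral>\<^sup>+y. emeasure (Ptil \<kappa> P G t u y) B \<partial>Ptil \<kappa> P G 0 t 0)"
proof (cases "t = 0")
  case True
  then show ?thesis
    using P_diag[of 0 0] by (simp add: Ptil_def admissible_def)
next
  case False
  with t have t: "0 < t" by simp
  have adm: "admissible 0 0" by (simp add: admissible_def)
  interpret G: prob_space "G t u" using G_prob[OF t tu] .
  have "(\<integral>\<^sup>+y. emeasure (Ptil \<kappa> P G t u y) B \<partial>Ptil \<kappa> P G 0 t 0)
      = (\<integral>\<^sup>+b. \<integral>\<^sup>+y. emeasure (mix_kernel t u y b) B \<partial>P 0 t 0 \<partial>G t u)"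
    unfolding Ptil_def[of \<kappa> P G 0] using t
    by (simp add: nn_integral_Ptil_swap[OF t tu B] prob_space_P[OF adm] sets_P[OF adm])
  also have "\<dots> = (\<integral>\<^sup>+b. emeasure (P 0 u 0) B \<partial>G t u)"
    using nn_integral_mix_kernel_P[OF t tu adm _ B] t by simp
  also have "\<dots> = emeasure (Ptil \<kappa> P G 0 u 0) B"
    by (simp add: Ptil_def G.emeasure_space_1)
  finally show ?thesis ..
qed

lemma Ptil_chapman_kolmogorov_pos:
  assumes s: "0 < s" and st: "s \<le> t" and tu: "t \<le> u" and B: "B \<in> sets borel"
  shows "emeasure (Ptil \<kappa> P G s u x) B = (\<integral>\<^sup>+y. emeasure (Ptil \<kappa> P G t u y) B \<partial>Ptil \<kappa> P G s t x)"
proof -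
  have t: "0 < t" and u: "0 < u" and su: "s \<le> u" using s st tu by auto
  define h where "h r = measure (mix_kernel s u x r) B" for r
  have h_eq: "ennreal (h r) = emeasure (mix_kernel s u x r) B"
    and h_bounds: "0 \<le> h r" "h r \<le> 1" for r
  proof -
    interpret prob_space "mix_kernel s u x r" using prob_space_mix_kernel[OF u] .
    show "ennreal (h r) = emeasure (mix_kernel s u x r) B" "0 \<le> h r" "h r \<le> 1"
      by (simp_all add: h_def emeasure_eq_measure)
  qed
  have h_meas: "h \<in> borel_measurable borel"
    unfolding h_def measure_def using measurable_emeasure_mix_kernel_param[OF u B] by measurable
  have "(\<integral>\<^sup>+y. emeasure (Ptil \<kappa> P G t u y) B \<partial>Ptil \<kappa> P G s t x)
      = (\<integral>\<^sup>+a. \<integral>\<^sup>+y. emeasure (Ptil \<kappa> P G t u y) B \<partial>mix_kernel s t x a \<partial>G s t)"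
    unfolding Ptil_eq_bind[OF s st]
    by (rule nn_integral_bind[OF measurable_emeasure_Ptil[OF t tu B] mix_kernel_measurable_subprob[OF s st]])
  also have "\<dots> = (\<integral>\<^sup>+a. \<integral>\<^sup>+b. \<integral>\<^sup>+y. emeasure (mix_kernel t u y b) B \<partial>mix_kernel s t x a \<partial>G t u \<partial>G s t)"
    by (simp add: nn_integral_Ptil_swap[OF t tu B] prob_space_mix_kernel[OF t] sets_mix_kernel[OF t])
  also have "\<dots> = (\<integral>\<^sup>+a. \<integral>\<^sup>+b. ennreal (h (a * b)) \<partial>G t u \<partial>G s t)"
  proof (rule nn_integral_cong_AE)
    show "AE a in G s t. (\<integral>\<^sup>+b. \<integral>\<^sup>+y. emeasure (mix_kernel t u y b) B \<partial>mix_kernel s t x a \<partial>G t u)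
        = (\<integral>\<^sup>+b. ennreal (h (a * b)) \<partial>G t u)"
      using AE_G_unit_interval[OF s st]
    proof eventually_elim
      case (elim a)
      show ?case
        using AE_G_unit_interval[OF t tu]
        by (intro nn_integral_cong_AE, eventually_elim)
           (simp add: h_eq elim nn_integral_mix_kernel_mix_kernel[OF s st tu B])
    qed
  qed
  also have "\<dots> = (\<integral>\<^sup>+r. ennreal (h r) \<partial>G s u)"
    by (rule nn_integral_G_comp[OF s st tu h_meas h_bounds])
  also have "\<dots> = emeasure (Ptil \<kappa> P G s u x) B"
    by (simp add: h_eq emeasure_Ptil[OF s su B])
  finally show ?thesis ..
qed

lemma transition_function_Ptil: "transition_function (Ptil \<kappa> P G)"
  unfolding transition_function_def
proof (intro conjI allI impI)
  show "prob_space (Ptil \<kappa> P G s t x)" "sets (Ptil \<kappa> P G s t x) = sets borel"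
    if "admissible s x \<and> s \<le> t" for s t x
    using that prob_space_Ptil sets_Ptil by auto
  show "(\<lambda>x. emeasure (Ptil \<kappa> P G s t x) B) \<in> borel_measurable borel"
    if "0 < s \<and> s \<le> t \<and> B \<in> sets borel" for s t B
    using that measurable_emeasure_Ptil by auto
  show "Ptil \<kappa> P G s s x = return borel x" if "admissible s x" for s x
    using that by (rule Ptil_diag)
  show "emeasure (Ptil \<kappa> P G s u x) B = (\<integral>\<^sup>+ y. emeasure (Ptil \<kappa> P G t u y) B \<partial>Ptil \<kappa> P G s t x)"
    if "admissible s x \<and> s \<le> t \<and> t \<le> u \<and> B \<in> sets borel" for s t u x B
  proof (cases "s = 0")
    case True
    with that show ?thesis
      using Ptil_chapman_kolmogorov_origin by (auto simp: admissible_def)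
  next
    case False
    with that show ?thesis
      using Ptil_chapman_kolmogorov_pos by (auto simp: admissible_def)
  qed
qed

end

theorem proposition2p2:
  fixes \<kappa> :: real
    and P :: "real \<Rightarrow> real \<Rightarrow> real \<Rightarrow> real measure"
    and G :: "real \<Rightarrow> real \<Rightarrow> real measure"
  assumes kappa_pos: "\<kappa> > 0"
    and P_tf: "transition_function P"
    and P_ss: "self_similar_tf \<kappa> P"
    and P_meas: "\<And>t B. 0 < t \<Longrightarrow> B \<in> sets borel \<Longrightarrow>
        (\<lambda>(s, x). emeasure (P s t x) B) \<in> borel_measurable (restrict_space borel {0<..t} \<Otimes>\<^sub>M borel)"
    and G_prob: "\<And>s t. 0 < s \<Longrightarrow> s \<le> t \<Longrightarrow> prob_space (G s t)"
    and G_sets: "\<And>s t. 0 < s \<Longrightarrow> s \<le> t \<Longrightarrow> sets (G s t) = sets borel"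
    and G_supp: "\<And>s t. 0 < s \<Longrightarrow> s \<le> t \<Longrightarrow> emeasure (G s t) {0<..1} = 1"
    and G_diag: "\<And>s. 0 < s \<Longrightarrow> G s s = return borel 1"
    and G_comp: "\<And>s t u (h :: real \<Rightarrow> real). 0 < s \<Longrightarrow> s \<le> t \<Longrightarrow> t \<le> u \<Longrightarrow>
        h \<in> borel_measurable borel \<Longrightarrow> (\<exists>C. \<forall>y. \<bar>h y\<bar> \<le> C) \<Longrightarrow>
        (\<integral>a. (\<integral>b. h (a * b) \<partial>(G t u)) \<partial>(G s t)) = (\<integral>r. h r \<partial>(G s u))"
  shows "transition_function (Ptil \<kappa> P G)"
proof -
  interpret self_similar_mixture \<kappa> P G
    by (intro self_similar_mixture.intro self_similar_transition.intro
        self_similar_mixture_axioms.intro) (fact P_tf P_ss P_meas G_prob G_sets G_supp G_diag G_comp)+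
  show ?thesis by (rule transition_function_Ptil)
qed

end
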